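(* Let $S$ be a regular semigroup with set of idempotents $E$, and let $e\in E$. Suppose the connected component of $e$ in $\mathcal G(E)$ (the set of idempotents joined to $e$ by an $E$-path) is finite, containing $k$ idempotents, which lie in $m$ distinct $\mathcal R$-classes and $n$ distinct $\mathcal L$-classes. Then $\mathcal G(E)(e,e)$ is a free group of rank $k-(m+n)+1$.
   Context: For idempotents $e,f$: $e\,\mathcal R\,f$ iff $ef=f,\ fe=e$; $e\,\mathcal L\,f$ iff $ef=e,\ fe=f$. An $E$-path is a sequence $(e_1,\dots,e_n)$ of idempotents with $e_i\,(\mathcal R\cup\mathcal L)\,e_{i+1}$ for all $i$. A vertex $e_i$ ($1<i<n$) is inessential if $e_{i-1}\,\mathcal R\,e_i\,\mathcal R\,e_{i+1}$ or $e_{i-1}\,\mathcal L\,e_i\,\mathcal L\,e_{i+1}$; an $E$-chain is an equivalence class of $E$-paths under the equivalence generated by inserting or deleting inessential vertices. $\mathcal G(E)$ is the groupoid with object set $E$ whose morphisms from $e$ to $f$ are $E$-chains from $e$ to $f$, composed by concatenation and inverted by reversal; $\mathcal G(E)(e,e)$ denotes the group of morphisms from $e$ to $e$. *)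

theory Defs
  imports "HOL-Algebra.Algebra"
begin

definition regular_semigroup :: "'a::semigroup_mult itself \<Rightarrow> bool" where
  "regular_semigroup _ \<longleftrightarrow> (\<forall>a::'a. \<exists>x. a * x * a = a)"

definition idems :: "'a::semigroup_mult set" where
  "idems = {x. x * x = x}"

definition Rrel :: "'a::semigroup_mult \<Rightarrow> 'a \<Rightarrow> bool" where
  "Rrel e f \<longleftrightarrow> e * f = f \<and> f * e = e"

definition Lrel :: "'a::semigroup_mult \<Rightarrow> 'a \<Rightarrow> bool" where
  "Lrel e f \<longleftrightarrow> e * f = e \<and> f * e = f"

definition epath :: "'a::semigroup_mult list \<Rightarrow> bool" where
  "epath p \<longleftrightarrow> p \<noteq> [] \<and> set p \<subseteq> idems \<and>
     (\<forall>i. Suc i < length p \<longrightarrow> Rrel (p ! i) (p ! Suc i) \<or> Lrel (p ! i) (p ! Suc i))"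

text \<open>One elementary step: deletion of an inessential vertex, or (to identify the
  path (e,e) with the trivial path (e)) deletion of a repeated consecutive vertex.\<close>
definition ess_step :: "('a::semigroup_mult list \<times> 'a list) set" where
  "ess_step =
     {(p, q). epath p \<and> epath q \<and>
        ((\<exists>xs a b c ys. p = xs @ [a, b, c] @ ys \<and> q = xs @ [a, c] @ ys \<and>
            ((Rrel a b \<and> Rrel b c) \<or> (Lrel a b \<and> Lrel b c))) \<or>
         (\<exists>xs a ys. p = xs @ [a, a] @ ys \<and> q = xs @ [a] @ ys))}"

definition chain_equiv :: "('a::semigroup_mult list \<times> 'a list) set" where
  "chain_equiv = {(p, q). epath p \<and> epath q \<and> (p, q) \<in> (ess_step \<union> ess_step\<inverse>)\<^sup>*}"

definition echains :: "'a::semigroup_mult \<Rightarrow> 'a \<Rightarrow> 'a list set set" where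
  "echains e f = {chain_equiv `` {p} | p. epath p \<and> hd p = e \<and> last p = f}"

definition chain_mult :: "'a::semigroup_mult list set \<Rightarrow> 'a list set \<Rightarrow> 'a list set" where
  "chain_mult A B = chain_equiv `` {(SOME p. p \<in> A) @ tl (SOME q. q \<in> B)}"

definition vertex_group :: "'a::semigroup_mult \<Rightarrow> 'a list set monoid" where
  "vertex_group e = \<lparr>carrier = echains e e, monoid.mult = chain_mult, one = chain_equiv `` {[e]}\<rparr>"

definition component :: "'a::semigroup_mult \<Rightarrow> 'a set" where
  "component e = {f. \<exists>p. epath p \<and> hd p = e \<and> last p = f}"

definition Rclass :: "'a::semigroup_mult \<Rightarrow> 'a set" where
  "Rclass f = {g \<in> idems. Rrel f g}"

definition Lclass :: "'a::semigroup_mult \<Rightarrow> 'a set" where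
  "Lclass f = {g \<in> idems. Lrel f g}"

fun eval_word :: "('g, 'm) monoid_scheme \<Rightarrow> (bool \<times> 'g) list \<Rightarrow> 'g" where
  "eval_word G [] = \<one>\<^bsub>G\<^esub>"
| "eval_word G ((b, x) # w) = (if b then x else inv\<^bsub>G\<^esub> x) \<otimes>\<^bsub>G\<^esub> eval_word G w"

definition reduced_word :: "(bool \<times> 'g) list \<Rightarrow> bool" where
  "reduced_word w \<longleftrightarrow> (\<forall>i. Suc i < length w \<longrightarrow>
      \<not> (snd (w ! i) = snd (w ! Suc i) \<and> fst (w ! i) \<noteq> fst (w ! Suc i)))"

definition free_basis :: "('g, 'm) monoid_scheme \<Rightarrow> 'g set \<Rightarrow> bool" where
  "free_basis G B \<longleftrightarrow> B \<subseteq> carrier G \<and> generate G B = carrier G \<and>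
     (\<forall>w. w \<noteq> [] \<and> set (map snd w) \<subseteq> B \<and> reduced_word w \<longrightarrow> eval_word G w \<noteq> one G)"

definition free_group_of_rank :: "('g, 'm) monoid_scheme \<Rightarrow> nat \<Rightarrow> bool" where
  "free_group_of_rank G r \<longleftrightarrow> group G \<and> (\<exists>B. finite B \<and> card B = r \<and> free_basis G B)"

end

theory Submission
  imports Defs
begin

(*
  Let C be the component of e in G(E). Its class graph is bipartite: the vertices are the
  R-classes and the L-classes meeting C, and every idempotent f in C is an edge joining
  Rclass f to Lclass f. It is connected, with m + n vertices and k edges, so a spanning tree
  has a set T of m + n - 1 edges. For every edge f let lambda_f be the loop at e that runs
  along tree paths to f, crosses it, and returns along the tree. Then lambda_f is trivial for
  f in T, and the lambda_f with f not in T form a free basis of G(E)(e,e), of rank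
  k - (m + n - 1).
  - Generation: every loop telescopes into loops through single steps; an R-step gives a
    trivial loop and an L-step f -> g gives lambda_f * inverse lambda_g.
  - Freeness: recording the L-steps of an E-path that leave or enter non-tree edges gives a
    word whose free reduction is invariant under E-chain equivalence; the loop of a reduced
    word in the lambda_f has exactly this word as its crossing word.
*)

section \<open>Green's relations on idempotents\<close>

lemma Rrel_sym: "Rrel a b \<Longrightarrow> Rrel b a"
  by (simp add: Rrel_def)

lemma Lrel_sym: "Lrel a b \<Longrightarrow> Lrel b a"
  by (simp add: Lrel_def)

lemma Rrel_trans:
  assumes "Rrel a b" and "Rrel b c"
  shows "Rrel a c"
proof -
  from assms have ab: "a * b = b" "b * a = a" and bc: "b * c = c" "c * b = b"
    by (simp_all add: Rrel_def)
  have "a * c = (a * b) * c" using bc(1) by (simp add: mult.assoc)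
  moreover have "c * a = (c * b) * a" using ab(2) by (simp add: mult.assoc)
  ultimately show ?thesis using ab bc by (simp add: Rrel_def)
qed

lemma Lrel_trans:
  assumes "Lrel a b" and "Lrel b c"
  shows "Lrel a c"
proof -
  from assms have ab: "a * b = a" "b * a = b" and bc: "b * c = b" "c * b = c"
    by (simp_all add: Lrel_def)
  have "a * c = a * (b * c)" using ab(1) by (simp add: mult.assoc[symmetric])
  moreover have "c * a = c * (b * a)" using bc(2) by (simp add: mult.assoc[symmetric])
  ultimately show ?thesis using ab bc by (simp add: Lrel_def)
qed

lemma Rrel_Lrel_eq: "Rrel a b \<Longrightarrow> Lrel a b \<Longrightarrow> a = b"
  unfolding Rrel_def Lrel_def by (metis (no_types))

lemma Rrel_refl: "a \<in> idems \<Longrightarrow> Rrel a a"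
  by (simp add: Rrel_def idems_def)

lemma Lrel_refl: "a \<in> idems \<Longrightarrow> Lrel a a"
  by (simp add: Lrel_def idems_def)

abbreviation adjacent :: "'a::semigroup_mult \<Rightarrow> 'a \<Rightarrow> bool" where
  "adjacent a b \<equiv> Rrel a b \<or> Lrel a b"

lemma adjacent_sym: "adjacent a b \<Longrightarrow> adjacent b a"
  using Rrel_sym Lrel_sym by blast

lemma Rclass_eq_iff:
  assumes "a \<in> idems" and "b \<in> idems"
  shows "Rclass a = Rclass b \<longleftrightarrow> Rrel a b"
proof
  assume "Rclass a = Rclass b"
  then show "Rrel a b" using assms(2) Rrel_refl[of b] unfolding Rclass_def by blast
next
  assume "Rrel a b"
  then have "Rrel a g \<longleftrightarrow> Rrel b g" for g using Rrel_sym Rrel_trans by blast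
  then show "Rclass a = Rclass b" unfolding Rclass_def by simp
qed

lemma Lclass_eq_iff:
  assumes "a \<in> idems" and "b \<in> idems"
  shows "Lclass a = Lclass b \<longleftrightarrow> Lrel a b"
proof
  assume "Lclass a = Lclass b"
  then show "Lrel a b" using assms(2) Lrel_refl[of b] unfolding Lclass_def by blast
next
  assume "Lrel a b"
  then have "Lrel a g \<longleftrightarrow> Lrel b g" for g using Lrel_sym Lrel_trans by blast
  then show "Lclass a = Lclass b" unfolding Lclass_def by simp
qed

section \<open>E-paths\<close>

lemma epath_Nil [simp]: "\<not> epath []"
  by (simp add: epath_def)

lemma epath_single [simp]: "epath [a] \<longleftrightarrow> a \<in> idems"
  by (simp add: epath_def)

lemma epath_Cons_Cons [simp]:
  "epath (a # b # w) \<longleftrightarrow> a \<in> idems \<and> adjacent a b \<and> epath (b # w)"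
proof -
  have "(\<forall>i. Suc i < length (a # b # w) \<longrightarrow> adjacent ((a # b # w) ! i) ((a # b # w) ! Suc i)) \<longleftrightarrow>
        adjacent a b \<and> (\<forall>i. Suc i < length (b # w) \<longrightarrow> adjacent ((b # w) ! i) ((b # w) ! Suc i))"
    (is "?L \<longleftrightarrow> ?R")
  proof
    assume L: ?L
    have "adjacent a b" using spec[OF L, of 0] by simp
    moreover have "\<forall>i. Suc i < length (b # w) \<longrightarrow> adjacent ((b # w) ! i) ((b # w) ! Suc i)"
      using L by (metis Suc_less_eq length_Cons nth_Cons_Suc)
    ultimately show ?R by blast
  next
    assume R: ?R
    show ?L
    proof (intro allI impI)
      fix i assume "Suc i < length (a # b # w)"
      then show "adjacent ((a # b # w) ! i) ((a # b # w) ! Suc i)"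
        using R by (cases i) auto
    qed
  qed
  moreover have "set (a # b # w) \<subseteq> idems \<longleftrightarrow> a \<in> idems \<and> set (b # w) \<subseteq> idems"
    by simp
  ultimately show ?thesis
    unfolding epath_def by (metis list.distinct(1))
qed

lemma epath_nonempty: "epath p \<Longrightarrow> p \<noteq> []"
  by auto

lemma epath_idems: "epath p \<Longrightarrow> set p \<subseteq> idems"
  by (simp add: epath_def)

lemma epath_append:
  assumes "xs \<noteq> []" and "ys \<noteq> []"
  shows "epath (xs @ ys) \<longleftrightarrow> epath xs \<and> epath ys \<and> adjacent (last xs) (hd ys)"
  using assms
proof (induction xs rule: induct_list012)
  case (2 a)
  then show ?case by (cases ys) auto
qed auto

lemma epath_appendI:
  "epath xs \<Longrightarrow> epath ys \<Longrightarrow> adjacent (last xs) (hd ys) \<Longrightarrow> epath (xs @ ys)"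
  using epath_append epath_nonempty by blast

lemma epath_snoc:
  "epath (xs @ [a]) \<longleftrightarrow> (if xs = [] then a \<in> idems else epath xs \<and> a \<in> idems \<and> adjacent (last xs) a)"
  using epath_append[of xs "[a]"] by auto

lemma epath_rev: "epath p \<Longrightarrow> epath (rev p)"
proof (induction p rule: induct_list012)
  case (3 a b w)
  then have "epath (rev (b # w))" "a \<in> idems" "adjacent b a"
    using adjacent_sym by auto
  then show ?case using epath_appendI[of "rev (b # w)" "[a]"] by (simp add: last_rev)
qed auto

lemma epath_join:
  assumes "epath p" "epath q" "last p = hd q"
  shows "epath (p @ tl q)"
proof (cases "tl q = []")
  case False
  then show ?thesis
    using assms epath_append[of p "tl q"] epath_nonempty[of p] by (cases q; cases "tl q") auto
qed (use assms in simp)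

lemma epath_replace:
  assumes "epath (A @ x @ B)" "epath y" "x \<noteq> []" "hd x = hd y" "last x = last y"
  shows "epath (A @ y @ B)"
proof -
  have y: "y \<noteq> []" using assms(2) by auto
  have xB: "epath (x @ B)"
    using assms(1,3) epath_append[of A "x @ B"] by (cases "A = []") auto
  have yB: "epath (y @ B)"
  proof (cases "B = []")
    case False
    then have "epath B \<and> adjacent (last x) (hd B)" using xB epath_append[of x B] assms(3) by simp
    then show ?thesis using False epath_append[of y B] assms(2,5) y by simp
  qed (use assms(2) in simp)
  show ?thesis
  proof (cases "A = []")
    case False
    then have "epath A \<and> adjacent (last A) (hd y)"
      using assms(1,3,4) epath_append[of A "x @ B"] by simp
    then show ?thesis using False yB epath_append[of A "y @ B"] y by simp
  qed (use yB in simp)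
qed

lemma epath_infix:
  assumes "epath (A @ x @ B)" and "x \<noteq> []"
  shows "epath x"
proof -
  have "epath (x @ B)"
    using assms epath_append[of A "x @ B"] by (cases "A = []") auto
  then show ?thesis
    using assms epath_append[of x B] by (cases "B = []") auto
qed

section \<open>Equivalence of E-paths\<close>

abbreviation chain_step :: "('a::semigroup_mult list \<times> 'a list) set" where
  "chain_step \<equiv> ess_step \<union> ess_step\<inverse>"

lemma ess_step_endpoints:
  assumes "(p, q) \<in> ess_step"
  shows "epath p \<and> epath q \<and> hd p = hd q \<and> last p = last q"
proof -
  from assms consider (del) xs a b c ys where "p = xs @ [a,b,c] @ ys" "q = xs @ [a,c] @ ys"
    | (dup) xs a ys where "p = xs @ [a,a] @ ys" "q = xs @ [a] @ ys"
    unfolding ess_step_def by blast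
  then have "hd p = hd q \<and> last p = last q"
  proof cases
    case del then show ?thesis by (cases xs; cases ys rule: rev_cases) auto
  next
    case dup then show ?thesis by (cases xs; cases ys rule: rev_cases) auto
  qed
  then show ?thesis using assms unfolding ess_step_def by auto
qed

lemma chain_step_endpoints:
  "(p, q) \<in> chain_step \<Longrightarrow> epath p \<and> epath q \<and> hd p = hd q \<and> last p = last q"
  using ess_step_endpoints[of p q] ess_step_endpoints[of q p] by auto

lemma chain_equiv_iff: "(p, q) \<in> chain_equiv \<longleftrightarrow> epath p \<and> epath q \<and> (p, q) \<in> chain_step\<^sup>*"
  by (simp add: chain_equiv_def)

lemma chain_equiv_endpoints:
  assumes "(p, q) \<in> chain_equiv"
  shows "hd p = hd q \<and> last p = last q"
proof -
  have "(p, q) \<in> chain_step\<^sup>*" using assms by (simp add: chain_equiv_iff)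
  then show ?thesis
  proof (induction rule: rtrancl_induct)
    case (step y z)
    then show ?case using chain_step_endpoints[of y z] by simp
  qed simp
qed

lemma chain_equiv_epath: "(p, q) \<in> chain_equiv \<Longrightarrow> epath p \<and> epath q"
  by (simp add: chain_equiv_iff)

lemma chain_equiv_ess_step: "(p, q) \<in> ess_step \<Longrightarrow> (p, q) \<in> chain_equiv"
  using ess_step_endpoints[of p q] by (auto simp: chain_equiv_iff)

lemma chain_equiv_refl: "epath p \<Longrightarrow> (p, p) \<in> chain_equiv"
  by (simp add: chain_equiv_iff)

lemma chain_equiv_sym: "(p, q) \<in> chain_equiv \<Longrightarrow> (q, p) \<in> chain_equiv"
  using sym_rtrancl[OF sym_Un_converse[of ess_step]] unfolding chain_equiv_iff
  by (auto dest: symD)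

lemma chain_equiv_trans:
  "(p, q) \<in> chain_equiv \<Longrightarrow> (q, r) \<in> chain_equiv \<Longrightarrow> (p, r) \<in> chain_equiv"
  unfolding chain_equiv_iff by (blast intro: rtrancl_trans)

lemma equiv_chain_equiv: "equiv {p. epath p} chain_equiv"
proof (rule equivI)
  show "chain_equiv \<subseteq> {p. epath p} \<times> {p. epath p}" using chain_equiv_epath by auto
  show "refl_on {p. epath p} chain_equiv" by (rule refl_onI) (simp add: chain_equiv_refl)
  show "sym chain_equiv" using chain_equiv_sym by (auto intro: symI)
  show "trans chain_equiv" using chain_equiv_trans by (auto intro: transI)
qed

lemma ess_step_delete:
  assumes "epath (xs @ [a,b,c] @ ys)" "epath (xs @ [a,c] @ ys)"
    and "(Rrel a b \<and> Rrel b c) \<or> (Lrel a b \<and> Lrel b c)"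
  shows "(xs @ [a,b,c] @ ys, xs @ [a,c] @ ys) \<in> ess_step"
  using assms unfolding ess_step_def by blast

lemma ess_step_dedup:
  assumes "epath (xs @ [a,a] @ ys)" "epath (xs @ [a] @ ys)"
  shows "(xs @ [a,a] @ ys, xs @ [a] @ ys) \<in> ess_step"
  using assms unfolding ess_step_def by blast

lemma chain_equiv_delete:
  assumes "epath (A @ [a,b,c] @ B)" "(Rrel a b \<and> Rrel b c) \<or> (Lrel a b \<and> Lrel b c)"
  shows "(A @ [a,b,c] @ B, A @ [a,c] @ B) \<in> chain_equiv"
proof -
  have "epath [a,b,c]" using epath_infix[OF assms(1)] by simp
  moreover have "adjacent a c" using assms(2) Rrel_trans Lrel_trans by blast
  ultimately have "epath [a,c]" by simp
  then have "epath (A @ [a,c] @ B)" using epath_replace[OF assms(1), of "[a,c]"] by simp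
  then show ?thesis
    using ess_step_delete[OF assms(1) _ assms(2)] chain_equiv_ess_step by blast
qed

lemma chain_equiv_dedup:
  assumes "epath (A @ [a,a] @ B)"
  shows "(A @ [a,a] @ B, A @ [a] @ B) \<in> chain_equiv"
proof -
  have "epath [a]" using epath_infix[OF assms] by simp
  then have "epath (A @ [a] @ B)" using epath_replace[OF assms, of "[a]"] by simp
  then show ?thesis using ess_step_dedup[OF assms] chain_equiv_ess_step by blast
qed

lemma ess_step_context:
  assumes "(x, y) \<in> ess_step" "epath (A @ x @ B)" "epath (A @ y @ B)"
  shows "(A @ x @ B, A @ y @ B) \<in> ess_step"
proof -
  from assms(1) consider
      (del) xs a b c ys where "x = xs @ [a,b,c] @ ys" "y = xs @ [a,c] @ ys"
        "(Rrel a b \<and> Rrel b c) \<or> (Lrel a b \<and> Lrel b c)"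
    | (dup) xs a ys where "x = xs @ [a,a] @ ys" "y = xs @ [a] @ ys"
    unfolding ess_step_def by blast
  then show ?thesis
  proof cases
    case del
    then show ?thesis using assms(2,3) ess_step_delete[of "A @ xs" a b c "ys @ B"] by simp
  next
    case dup
    then show ?thesis using assms(2,3) ess_step_dedup[of "A @ xs" a "ys @ B"] by simp
  qed
qed

lemma chain_equiv_context:
  assumes "(x, y) \<in> chain_equiv" "epath (A @ x @ B)"
  shows "(A @ x @ B, A @ y @ B) \<in> chain_equiv"
proof -
  have "(x, y) \<in> chain_step\<^sup>*" using assms(1) by (simp add: chain_equiv_iff)
  then have "epath (A @ y @ B) \<and> hd y = hd x \<and> last y = last x \<and>
    (A @ x @ B, A @ y @ B) \<in> chain_step\<^sup>*"
  proof (induction rule: rtrancl_induct)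
    case (step z z')
    then have z': "epath z'" "hd z' = hd z" "last z' = last z" "epath z"
      using chain_step_endpoints[OF step(2)] by auto
    have "epath (A @ z' @ B)"
      using epath_replace[of A z B z'] step.IH z' epath_nonempty[of z] by simp
    moreover have "(A @ z @ B, A @ z' @ B) \<in> chain_step"
      using step(2) step.IH ess_step_context[of z z' A B] ess_step_context[of z' z A B]
        \<open>epath (A @ z' @ B)\<close> by auto
    ultimately show ?case using step.IH z' by (auto intro: rtrancl_into_rtrancl)
  qed (use assms(2) in simp)
  then show ?thesis using assms(2) by (simp add: chain_equiv_iff)
qed

lemma chain_equiv_backtrack: "epath p \<Longrightarrow> (p @ tl (rev p), [hd p]) \<in> chain_equiv"
proof (induction p rule: rev_induct)
  case (snoc a q)
  show ?case
  proof (cases "q = []")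
    case True
    then show ?thesis using snoc by (simp add: chain_equiv_refl)
  next
    case False
    then obtain q' b where qb: "q = q' @ [b]" by (metis rev_exhaust)
    have "epath q" and ba: "adjacent b a" using snoc(2) False qb epath_snoc[of q a] by auto
    have loop: "q @ [a] @ tl (rev (q @ [a])) = q' @ [b, a, b] @ rev q'" using qb by simp
    have "epath (q' @ [b, a, b] @ rev q')"
      using epath_join[OF snoc(2) epath_rev[OF snoc(2)]] loop by (simp add: last_rev hd_rev)
    then have "(q' @ [b, a, b] @ rev q', q' @ [b, b] @ rev q') \<in> chain_equiv"
      using chain_equiv_delete ba Rrel_sym Lrel_sym by blast
    moreover have "(q' @ [b, b] @ rev q', q' @ [b] @ rev q') \<in> chain_equiv"
      using chain_equiv_dedup calculation chain_equiv_epath by blast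
    moreover have "(q' @ [b] @ rev q', [hd q]) \<in> chain_equiv"
      using snoc.IH[OF \<open>epath q\<close>] qb by simp
    ultimately show ?thesis using loop False by (auto intro: chain_equiv_trans)
  qed
qed simp

lemma chain_equiv_backtrack_rev: "epath p \<Longrightarrow> (rev p @ tl p, [last p]) \<in> chain_equiv"
  using chain_equiv_backtrack[OF epath_rev[of p]] by (simp add: hd_rev)

lemma chain_equiv_retrace: "epath p \<Longrightarrow> (p @ rev p, [hd p]) \<in> chain_equiv"
proof -
  assume p: "epath p"
  then obtain q a where pa: "p = q @ [a]" by (metis epath_nonempty rev_exhaust)
  have "a \<in> idems" using epath_idems[OF p] pa by auto
  then have "epath (p @ rev p)"
    using epath_appendI[OF p epath_rev[OF p]] pa Rrel_refl[of a] by (simp add: hd_rev)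
  then have "(q @ [a, a] @ rev q, q @ [a] @ rev q) \<in> chain_equiv"
    using chain_equiv_dedup pa by simp
  moreover have "q @ [a] @ rev q = p @ tl (rev p)" and "p @ rev p = q @ [a, a] @ rev q"
    using pa by simp_all
  ultimately show ?thesis using chain_equiv_trans chain_equiv_backtrack[OF p] by metis
qed

lemma chain_equiv_detour:
  assumes path: "epath (A @ [f] @ (rev w @ tl w) @ [g] @ B)" and "epath w"
    and turn: "(Rrel f (last w) \<and> Rrel (last w) g) \<or> (Lrel f (last w) \<and> Lrel (last w) g)"
  shows "(A @ [f] @ (rev w @ tl w) @ [g] @ B, A @ [f, g] @ B) \<in> chain_equiv"
proof -
  have "(A @ [f] @ (rev w @ tl w) @ [g] @ B, A @ [f] @ [last w] @ [g] @ B) \<in> chain_equiv"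
    using chain_equiv_context[OF chain_equiv_backtrack_rev[OF \<open>epath w\<close>], of "A @ [f]" "[g] @ B"] path
    by simp
  moreover have "(A @ [f, last w, g] @ B, A @ [f, g] @ B) \<in> chain_equiv"
    using chain_equiv_delete calculation chain_equiv_epath turn by fastforce
  ultimately show ?thesis using chain_equiv_trans by fastforce
qed

section \<open>The vertex group\<close>

definition chain_of :: "'a::semigroup_mult list \<Rightarrow> 'a list set" where
  "chain_of p = chain_equiv `` {p}"

lemma chain_of_eq_iff:
  "epath p \<Longrightarrow> epath q \<Longrightarrow> chain_of p = chain_of q \<longleftrightarrow> (p, q) \<in> chain_equiv"
  unfolding chain_of_def using eq_equiv_class_iff[OF equiv_chain_equiv] by simp

lemma chain_of_eqI: "(p, q) \<in> chain_equiv \<Longrightarrow> chain_of p = chain_of q"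
  using chain_of_eq_iff chain_equiv_epath by blast

lemma chain_of_self: "epath p \<Longrightarrow> p \<in> chain_of p"
  by (simp add: chain_of_def chain_equiv_refl)

lemma append_tl_eq_butlast_append:
  "p \<noteq> [] \<Longrightarrow> q \<noteq> [] \<Longrightarrow> last p = hd q \<Longrightarrow> p @ tl q = butlast p @ q"
  by (cases q; cases p rule: rev_cases) auto

lemma last_append_tl: "p \<noteq> [] \<Longrightarrow> q \<noteq> [] \<Longrightarrow> last p = hd q \<Longrightarrow> last (p @ tl q) = last q"
  by (simp add: append_tl_eq_butlast_append)

lemma chain_mult_chain_of:
  assumes "epath p" "epath q" "last p = hd q"
  shows "chain_mult (chain_of p) (chain_of q) = chain_of (p @ tl q)"
proof -
  define p' where "p' = (SOME x. x \<in> chain_of p)"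
  define q' where "q' = (SOME x. x \<in> chain_of q)"
  have pp: "(p, p') \<in> chain_equiv"
    using someI[of "\<lambda>x. x \<in> chain_of p", OF chain_of_self[OF assms(1)]]
    unfolding p'_def chain_of_def by simp
  have qq: "(q, q') \<in> chain_equiv"
    using someI[of "\<lambda>x. x \<in> chain_of q", OF chain_of_self[OF assms(2)]]
    unfolding q'_def chain_of_def by simp
  have ne: "p \<noteq> []" "q \<noteq> []" using assms by auto
  have ends: "hd q' = hd q" "last p' = last p" "q' \<noteq> []"
    using chain_equiv_endpoints[OF pp] chain_equiv_endpoints[OF qq] chain_equiv_epath[OF qq]
    by auto
  have "epath (butlast p @ q @ [])"
    using epath_join[OF assms] append_tl_eq_butlast_append[of p q] assms ne by simp
  then have "(butlast p @ q @ [], butlast p @ q' @ []) \<in> chain_equiv"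
    by (rule chain_equiv_context[OF qq])
  then have 1: "(p @ tl q, p @ tl q') \<in> chain_equiv"
    using append_tl_eq_butlast_append[of p q] append_tl_eq_butlast_append[of p q'] assms ends ne
    by simp
  have "epath ([] @ p @ tl q')"
    using epath_join[OF assms(1)] chain_equiv_epath[OF qq] assms(3) ends by simp
  then have "([] @ p @ tl q', [] @ p' @ tl q') \<in> chain_equiv"
    by (rule chain_equiv_context[OF pp])
  then have "(p @ tl q, p' @ tl q') \<in> chain_equiv" using 1 chain_equiv_trans by simp
  then show ?thesis
    using chain_of_eqI unfolding chain_mult_def p'_def q'_def chain_of_def by metis
qed

lemma echains_iff: "x \<in> echains e f \<longleftrightarrow> (\<exists>p. epath p \<and> hd p = e \<and> last p = f \<and> x = chain_of p)"
  unfolding echains_def chain_of_def by auto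

lemma vertex_group_carrier: "carrier (vertex_group e) = echains e e"
  by (simp add: vertex_group_def)

lemma vertex_group_one: "\<one>\<^bsub>vertex_group e\<^esub> = chain_of [e]"
  by (simp add: vertex_group_def chain_of_def)

lemma chain_of_in_vertex_group:
  "epath p \<Longrightarrow> hd p = e \<Longrightarrow> last p = e \<Longrightarrow> chain_of p \<in> carrier (vertex_group e)"
  by (auto simp: vertex_group_carrier echains_iff)

lemma vertex_group_elem:
  assumes "x \<in> carrier (vertex_group e)"
  obtains p where "epath p" "hd p = e" "last p = e" "x = chain_of p"
  using assms by (auto simp: vertex_group_carrier echains_iff)

lemma vertex_group_mult:
  assumes "epath p" "epath q" "last p = hd q"
  shows "chain_of p \<otimes>\<^bsub>vertex_group e\<^esub> chain_of q = chain_of (p @ tl q)"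
  using chain_mult_chain_of[OF assms] by (simp add: vertex_group_def)

lemma loop_join:
  assumes "epath p" "hd p = e" "last p = e" "epath q" "hd q = e" "last q = e"
  shows "epath (p @ tl q) \<and> hd (p @ tl q) = e \<and> last (p @ tl q) = e"
  using assms epath_join last_append_tl epath_nonempty by (metis hd_append2)

lemma vertex_group_is_group:
  assumes "e \<in> idems"
  shows "group (vertex_group e)"
proof (rule groupI)
  fix x y
  assume "x \<in> carrier (vertex_group e)" "y \<in> carrier (vertex_group e)"
  then obtain p q where p: "epath p" "hd p = e" "last p = e" "x = chain_of p"
    and q: "epath q" "hd q = e" "last q = e" "y = chain_of q"
    by (metis vertex_group_elem)
  then show "x \<otimes>\<^bsub>vertex_group e\<^esub> y \<in> carrier (vertex_group e)"
    using vertex_group_mult loop_join[OF p(1-3) q(1-3)] chain_of_in_vertex_group by metis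
next
  show "\<one>\<^bsub>vertex_group e\<^esub> \<in> carrier (vertex_group e)"
    using assms chain_of_in_vertex_group[of "[e]"] by (simp add: vertex_group_one)
next
  fix x y z
  assume "x \<in> carrier (vertex_group e)" "y \<in> carrier (vertex_group e)"
    "z \<in> carrier (vertex_group e)"
  then obtain p q r where p: "epath p" "hd p = e" "last p = e" "x = chain_of p"
    and q: "epath q" "hd q = e" "last q = e" "y = chain_of q"
    and r: "epath r" "hd r = e" "last r = e" "z = chain_of r"
    by (metis vertex_group_elem)
  have "(p @ tl q) @ tl r = p @ tl (q @ tl r)" using q by (cases q) auto
  then show "x \<otimes>\<^bsub>vertex_group e\<^esub> y \<otimes>\<^bsub>vertex_group e\<^esub> z =
      x \<otimes>\<^bsub>vertex_group e\<^esub> (y \<otimes>\<^bsub>vertex_group e\<^esub> z)"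
    using p q r vertex_group_mult loop_join[OF p(1-3) q(1-3)] loop_join[OF q(1-3) r(1-3)]
    by metis
next
  fix x
  assume "x \<in> carrier (vertex_group e)"
  then obtain p where p: "epath p" "hd p = e" "last p = e" "x = chain_of p"
    by (metis vertex_group_elem)
  have "[e] @ tl p = p" using p by (cases p) auto
  then show "\<one>\<^bsub>vertex_group e\<^esub> \<otimes>\<^bsub>vertex_group e\<^esub> x = x"
    using vertex_group_mult[of "[e]" p e] assms p by (simp add: vertex_group_one)
next
  fix x
  assume "x \<in> carrier (vertex_group e)"
  then obtain p where p: "epath p" "hd p = e" "last p = e" "x = chain_of p"
    by (metis vertex_group_elem)
  have r: "epath (rev p)" "hd (rev p) = e" "last (rev p) = e"
    using p epath_rev by (auto simp: hd_rev last_rev)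
  have "chain_of (rev p) \<otimes>\<^bsub>vertex_group e\<^esub> x = chain_of [e]"
    using vertex_group_mult[OF r(1) p(1)] p r chain_of_eqI[OF chain_equiv_backtrack_rev[OF p(1)]]
    by simp
  then show "\<exists>y\<in>carrier (vertex_group e). y \<otimes>\<^bsub>vertex_group e\<^esub> x = \<one>\<^bsub>vertex_group e\<^esub>"
    using chain_of_in_vertex_group[OF r] by (auto simp: vertex_group_one)
qed

lemma vertex_group_inv:
  assumes "e \<in> idems" "epath p" "hd p = e" "last p = e"
  shows "inv\<^bsub>vertex_group e\<^esub> (chain_of p) = chain_of (rev p)"
proof -
  interpret G: group "vertex_group e" using vertex_group_is_group[OF assms(1)] .
  have r: "epath (rev p)" "hd (rev p) = e" "last (rev p) = e"
    using assms epath_rev by (auto simp: hd_rev last_rev)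
  have "chain_of (rev p) \<otimes>\<^bsub>vertex_group e\<^esub> chain_of p = \<one>\<^bsub>vertex_group e\<^esub>"
    using vertex_group_mult[OF r(1) assms(2)] assms r
      chain_of_eqI[OF chain_equiv_backtrack_rev[OF assms(2)]]
    by (simp add: vertex_group_one)
  then show ?thesis
    using G.inv_equality chain_of_in_vertex_group[OF r] chain_of_in_vertex_group[OF assms(2-4)]
    by blast
qed

section \<open>Free reduction of signed words\<close>

definition flip :: "bool \<times> 'b \<Rightarrow> bool \<times> 'b" where
  "flip x = (\<not> fst x, snd x)"

lemma flip_flip [simp]: "flip (flip x) = x"
  by (simp add: flip_def)

fun push_letter :: "bool \<times> 'b \<Rightarrow> (bool \<times> 'b) list \<Rightarrow> (bool \<times> 'b) list" where
  "push_letter x [] = [x]"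
| "push_letter x (y # w) = (if y = flip x then w else x # y # w)"

fun free_reduce :: "(bool \<times> 'b) list \<Rightarrow> (bool \<times> 'b) list" where
  "free_reduce [] = []"
| "free_reduce (x # w) = push_letter x (free_reduce w)"

fun freely_reduced :: "(bool \<times> 'b) list \<Rightarrow> bool" where
  "freely_reduced (x # y # w) = (y \<noteq> flip x \<and> freely_reduced (y # w))"
| "freely_reduced _ = True"

lemma freely_reduced_tl: "freely_reduced (y # w) \<Longrightarrow> freely_reduced w"
  by (cases w) auto

lemma freely_reduced_push_letter: "freely_reduced w \<Longrightarrow> freely_reduced (push_letter x w)"
  by (cases w) (auto dest: freely_reduced_tl)

lemma freely_reduced_free_reduce: "freely_reduced (free_reduce w)"
  by (induction w) (auto intro: freely_reduced_push_letter)

lemma free_reduce_id: "freely_reduced w \<Longrightarrow> free_reduce w = w"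
  by (induction w rule: freely_reduced.induct) auto

lemma free_reduce_append: "free_reduce (u @ w) = foldr push_letter u (free_reduce w)"
  by (induction u) auto

lemma push_letter_flip: "freely_reduced s \<Longrightarrow> push_letter x (push_letter (flip x) s) = s"
  by (cases s rule: freely_reduced.cases) auto

lemma free_reduce_cancel_pair: "free_reduce (U @ [x, flip x] @ V) = free_reduce (U @ V)"
  using push_letter_flip[OF freely_reduced_free_reduce[of V], of x]
  by (simp add: free_reduce_append[of U])

lemma reduced_word_Cons: "reduced_word (x # w) \<Longrightarrow> reduced_word w"
  unfolding reduced_word_def by (metis Suc_less_eq length_Cons nth_Cons_Suc)

lemma reduced_word_Cons_Cons:
  "reduced_word (a # c # w) \<Longrightarrow> \<not> (snd a = snd c \<and> fst a \<noteq> fst c)"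
  unfolding reduced_word_def by (drule spec[of _ 0]) simp

lemma freely_reduced_relabel:
  assumes "reduced_word w" and "inj_on h (snd ` set w)"
  shows "freely_reduced (map (apsnd h) w)"
  using assms
proof (induction w rule: induct_list012)
  case (3 a c w)
  have "inj_on h (snd ` set (c # w))"
    using "3.prems"(2) by (rule inj_on_subset) auto
  then have "freely_reduced (map (apsnd h) (c # w))"
    using "3.IH"(2) reduced_word_Cons[OF "3.prems"(1)] by blast
  moreover have "(fst c, h (snd c)) \<noteq> flip (fst a, h (snd a))"
    using reduced_word_Cons_Cons[OF "3.prems"(1)] "3.prems"(2) by (auto simp: flip_def inj_on_def)
  ultimately show ?case by (cases a; cases c) simp
qed auto

section \<open>The crossing word of an E-path\<close>

text \<open>Fix a set \<open>N\<close> of idempotents. Every step \<open>a \<rightarrow> b\<close> of an E-path which is not an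
  \<open>\<R>\<close>-step contributes the letters \<open>a\<^sup>+ b\<^sup>-\<close>, keeping only those in \<open>N\<close>. Modulo free
  reduction the resulting word is an invariant of E-chains; it is the tool that shows
  the loops attached to \<open>N\<close> are free generators.\<close>
definition letter_pos :: "'a set \<Rightarrow> 'a \<Rightarrow> (bool \<times> 'a) list" where
  "letter_pos N a = (if a \<in> N then [(True, a)] else [])"

definition letter_neg :: "'a set \<Rightarrow> 'a \<Rightarrow> (bool \<times> 'a) list" where
  "letter_neg N a = (if a \<in> N then [(False, a)] else [])"

definition step_word :: "'a set \<Rightarrow> 'a::semigroup_mult \<Rightarrow> 'a \<Rightarrow> (bool \<times> 'a) list" where
  "step_word N a b = (if Rrel a b then [] else letter_pos N a @ letter_neg N b)"

fun crossing_word :: "'a::semigroup_mult set \<Rightarrow> 'a list \<Rightarrow> (bool \<times> 'a) list" where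
  "crossing_word N (a # b # w) = step_word N a b @ crossing_word N (b # w)"
| "crossing_word N _ = []"

lemma crossing_word_split:
  "crossing_word N (xs @ a # ys) = crossing_word N (xs @ [a]) @ crossing_word N (a # ys)"
  by (induction xs rule: induct_list012) auto

lemma crossing_word_join:
  assumes "p \<noteq> []" "q \<noteq> []" "last p = hd q"
  shows "crossing_word N (p @ tl q) = crossing_word N p @ crossing_word N q"
proof -
  obtain p' where "p = p' @ [hd q]" using assms by (metis append_butlast_last_id)
  moreover obtain q' where "q = hd q # q'" using assms by (metis list.collapse)
  ultimately show ?thesis
    using crossing_word_split[of N p' "hd q" q']
    by (metis append_assoc append_Cons append_Nil list.sel(3))
qed

lemma crossing_word_rev: "crossing_word N (rev p) = rev (map flip (crossing_word N p))"
proof (induction N p rule: crossing_word.induct)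
  case (1 N a b w)
  have "step_word N b a = rev (map flip (step_word N a b))"
    by (auto simp: step_word_def letter_pos_def letter_neg_def flip_def Rrel_def)
  then show ?case
    using 1 crossing_word_split[of N "rev w" b "[a]"] by simp
qed auto

lemma crossing_word_outside: "set p \<inter> N = {} \<Longrightarrow> crossing_word N p = []"
  by (induction N p rule: crossing_word.induct) (auto simp: step_word_def letter_pos_def letter_neg_def)

lemma step_word_Lrel:
  assumes "Lrel a b" "a \<in> idems"
  shows "step_word N a b = (if a = b then [] else letter_pos N a @ letter_neg N b)"
  using assms Rrel_Lrel_eq Rrel_refl by (auto simp: step_word_def)

lemma free_reduce_letter_pair:
  "free_reduce (U @ letter_neg N b @ letter_pos N b @ V) = free_reduce (U @ V)"
  "free_reduce (U @ letter_pos N b @ letter_neg N b @ V) = free_reduce (U @ V)"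
  using free_reduce_cancel_pair[of U "(False, b)" V] free_reduce_cancel_pair[of U "(True, b)" V]
  by (auto simp: letter_pos_def letter_neg_def flip_def)

text \<open>Each elementary move preserves the reduced crossing word: an inessential vertex of an
  \<open>\<R>\<close>-run contributes nothing, one of an \<open>\<L>\<close>-run \<open>a \<rightarrow> b \<rightarrow> c\<close> inserts the cancelling
  pair \<open>b\<^sup>- b\<^sup>+\<close>.\<close>
lemma ess_step_free_reduce:
  assumes "(p, q) \<in> ess_step"
  shows "free_reduce (crossing_word N p) = free_reduce (crossing_word N q)"
proof -
  from assms consider
      (del) xs a b c ys where "p = xs @ [a,b,c] @ ys" "q = xs @ [a,c] @ ys"
        "(Rrel a b \<and> Rrel b c) \<or> (Lrel a b \<and> Lrel b c)"
    | (dup) xs a ys where "p = xs @ [a,a] @ ys" "q = xs @ [a] @ ys"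
    unfolding ess_step_def by blast
  then show ?thesis
  proof cases
    case del
    define U where "U = crossing_word N (xs @ [a])"
    define V where "V = crossing_word N (c # ys)"
    have p: "crossing_word N p = U @ step_word N a b @ step_word N b c @ V"
      unfolding U_def V_def del(1) using crossing_word_split[of N xs a "b # c # ys"] by simp
    have q: "crossing_word N q = U @ step_word N a c @ V"
      unfolding U_def V_def del(2) using crossing_word_split[of N xs a "c # ys"] by simp
    have "epath p" using assms unfolding ess_step_def by simp
    then have idem: "a \<in> idems" "b \<in> idems" using del(1) epath_idems by fastforce+
    show ?thesis
    proof (cases "Rrel a b \<and> Rrel b c")
      case True
      moreover have "Rrel a c" using True Rrel_trans by blast
      ultimately show ?thesis using p q by (simp add: step_word_def)
    next
      case False
      then have L: "Lrel a b" "Lrel b c" "Lrel a c" using del(3) Lrel_trans by blast+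
      then show ?thesis
        using p q idem step_word_Lrel[OF L(1)] step_word_Lrel[OF L(2)] step_word_Lrel[OF L(3)]
          free_reduce_letter_pair[of "U @ letter_pos N a" N b]
          free_reduce_letter_pair(2)[of U N a V]
        by auto
    qed
  next
    case dup
    have "epath p" using assms unfolding ess_step_def by simp
    then have "a \<in> idems" using dup(1) epath_idems by fastforce
    then have "step_word N a a = []" by (simp add: step_word_def Rrel_refl)
    then show ?thesis
      using dup crossing_word_split[of N xs a "a # ys"] crossing_word_split[of N xs a ys] by simp
  qed
qed

lemma chain_equiv_free_reduce:
  assumes "(p, q) \<in> chain_equiv"
  shows "free_reduce (crossing_word N p) = free_reduce (crossing_word N q)"
proof -
  have "(p, q) \<in> chain_step\<^sup>*" using assms by (simp add: chain_equiv_iff)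
  then show ?thesis
  proof (induction rule: rtrancl_induct)
    case (step y z)
    then show ?case using ess_step_free_reduce[of y z N] ess_step_free_reduce[of z y N] by auto
  qed simp
qed

section \<open>Spanning trees of the class graph\<close>

text \<open>The class graph of the component of \<open>e\<close> has the \<open>\<R>\<close>-classes and the \<open>\<L>\<close>-classes as
  vertices and one edge \<open>Rclass f \<longrightarrow> Lclass f\<close> for every idempotent \<open>f\<close> of the component.\<close>

lemma component_self: "e \<in> idems \<Longrightarrow> e \<in> component e"
  unfolding component_def by (rule CollectI, rule exI[of _ "[e]"]) simp

lemma component_idems: "f \<in> component e \<Longrightarrow> f \<in> idems"
  unfolding component_def using epath_idems last_in_set epath_nonempty by blast

lemma component_last: "epath p \<Longrightarrow> hd p = e \<Longrightarrow> last p \<in> component e"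
  unfolding component_def by auto

text \<open>The class graph is connected: a set of \<open>\<R>\<close>- and \<open>\<L>\<close>-classes containing \<open>Rclass e\<close>
  and closed under the edges contains every \<open>\<R>\<close>-class of the component.\<close>
lemma closed_class_sets_cover:
  assumes "Rclass e \<in> VR" and closed: "\<forall>f\<in>component e. Rclass f \<in> VR \<longleftrightarrow> Lclass f \<in> VL"
    and "f \<in> component e"
  shows "Rclass f \<in> VR"
proof -
  have "Rclass (last p) \<in> VR" if "epath p" "hd p = e" for p
    using that
  proof (induction p rule: rev_induct)
    case (snoc a q)
    show ?case
    proof (cases "q = []")
      case True
      then show ?thesis using snoc assms(1) by simp
    next
      case False
      then have q: "epath q" "hd q = e" "a \<in> idems" "adjacent (last q) a"
        using snoc.prems epath_snoc[of q a] by auto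
      have IH: "Rclass (last q) \<in> VR" using snoc.IH[OF q(1,2)] .
      have lq: "last q \<in> component e" "last q \<in> idems"
        using component_last[OF q(1,2)] component_idems by auto
      have "a \<in> component e" using component_last[OF snoc.prems] by simp
      then show ?thesis
        using q(3,4) IH lq closed Rclass_eq_iff[OF q(3) lq(2)] Lclass_eq_iff[OF q(3) lq(2)]
          Rrel_sym Lrel_sym
        by (metis last_snoc)
    qed
  qed simp
  then show ?thesis using assms(3) unfolding component_def by blast
qed

text \<open>A tree path from \<open>e\<close>: an E-path whose later vertices are tree edges in \<open>T\<close> and whose
  first step is an \<open>\<R>\<close>-step, so that it crosses no \<open>\<L>\<close>-step outside \<open>T\<close>.\<close>
definition tree_path :: "'a::semigroup_mult \<Rightarrow> 'a set \<Rightarrow> 'a list \<Rightarrow> bool" where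
  "tree_path e T p \<longleftrightarrow> epath p \<and> hd p = e \<and> set (tl p) \<subseteq> T \<and> (tl p \<noteq> [] \<longrightarrow> Rrel e (hd (tl p)))"

lemma tree_path_mono: "tree_path e T p \<Longrightarrow> T \<subseteq> T' \<Longrightarrow> tree_path e T' p"
  unfolding tree_path_def by blast

lemma tree_path_snoc:
  assumes "tree_path e T p" "epath (p @ [f])" "tl p = [] \<Longrightarrow> Rrel e f"
  shows "tree_path e (insert f T) (p @ [f])"
proof -
  have "p \<noteq> []" using assms(1) unfolding tree_path_def by auto
  then show ?thesis using assms unfolding tree_path_def by (cases "tl p = []") auto
qed

lemma tree_path_crossing_word:
  assumes "tree_path e T p" "N \<inter> T = {}"
  shows "crossing_word N p = []"
proof -
  obtain t where p: "p = e # t" and t: "set t \<subseteq> T" "t \<noteq> [] \<Longrightarrow> Rrel e (hd t)"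
    using assms(1) unfolding tree_path_def by (cases p) auto
  have "crossing_word N t = []" using t(1) assms(2) by (intro crossing_word_outside) auto
  then show ?thesis using p t(2) by (cases t) (auto simp: step_word_def)
qed

text \<open>A partial spanning tree of the class graph, grown from \<open>Rclass e\<close>: reached vertex sets
  \<open>VR\<close> and \<open>VL\<close>, tree edges \<open>T\<close> (one fewer than reached vertices), tree paths \<open>u r\<close> from \<open>e\<close>
  into every reached \<open>\<R>\<close>-class \<open>r\<close> and \<open>v l\<close> into every reached \<open>\<L>\<close>-class \<open>l\<close> (the latter
  ending with a tree edge), such that the loop around every tree edge is trivial.\<close>
locale partial_tree =
  fixes e :: "'a::semigroup_mult" and VR VL :: "'a set set"
    and u v :: "'a set \<Rightarrow> 'a list" and T :: "'a set"
  assumes VR_sub: "VR \<subseteq> Rclass ` component e"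
    and VL_sub: "VL \<subseteq> Lclass ` component e"
    and root: "Rclass e \<in> VR"
    and root_path: "u (Rclass e) = [e]"
    and T_sub: "T \<subseteq> component e"
    and card_T: "card T + 1 = card VR + card VL"
    and edge_Rclass: "f \<in> T \<Longrightarrow> Rclass f \<in> VR"
    and edge_Lclass: "f \<in> T \<Longrightarrow> Lclass f \<in> VL"
    and u_tree_path: "r \<in> VR \<Longrightarrow> tree_path e T (u r)"
    and u_end: "r \<in> VR \<Longrightarrow> Rclass (last (u r)) = r"
    and v_tree_path: "l \<in> VL \<Longrightarrow> tree_path e T (v l)"
    and v_long: "l \<in> VL \<Longrightarrow> tl (v l) \<noteq> []"
    and v_last_edge: "l \<in> VL \<Longrightarrow> last (v l) \<in> T"
    and v_end: "l \<in> VL \<Longrightarrow> Lclass (last (v l)) = l"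
    and edge_loop_trivial: "f \<in> T \<Longrightarrow> (u (Rclass f) @ [f] @ rev (v (Lclass f)), [e]) \<in> chain_equiv"
begin

lemma finite_parts:
  assumes "finite (component e)"
  shows "finite VR" "finite VL" "finite T"
  using VR_sub VL_sub T_sub assms by (meson finite_subset finite_imageI)+

lemma tree_paths_insert:
  "r \<in> VR \<Longrightarrow> tree_path e (insert f T) (u r)" "l \<in> VL \<Longrightarrow> tree_path e (insert f T) (v l)"
  using u_tree_path v_tree_path tree_path_mono by (meson subset_insertI)+

lemma extend_tree_path:
  assumes p: "tree_path e T p" and f: "f \<in> idems" "adjacent (last p) f"
    and first: "tl p = [] \<Longrightarrow> Rrel e f"
  shows "tree_path e (insert f T) (p @ [f])" "tl (p @ [f]) \<noteq> []"
    "(p @ [f] @ rev (p @ [f]), [e]) \<in> chain_equiv"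
proof -
  have p': "epath p" "hd p = e" using p unfolding tree_path_def by auto
  then have epq: "epath (p @ [f])" using epath_appendI[of p "[f]"] f by simp
  show "tree_path e (insert f T) (p @ [f])" using tree_path_snoc[OF p epq first] .
  show "tl (p @ [f]) \<noteq> []" using p' by (cases p) auto
  show "(p @ [f] @ rev (p @ [f]), [e]) \<in> chain_equiv"
    using chain_equiv_retrace[OF epq] p' epath_nonempty[OF p'(1)] by simp
qed

lemma add_Lclass:
  assumes fin: "finite (component e)"
    and f: "f \<in> component e" "Rclass f \<in> VR" "Lclass f \<notin> VL"
  shows "partial_tree e VR (insert (Lclass f) VL) u (v(Lclass f := u (Rclass f) @ [f])) (insert f T)"
proof -
  let ?p = "u (Rclass f)"
  have p: "tree_path e T ?p" using u_tree_path f(2) .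
  then have "epath ?p" "hd ?p = e" unfolding tree_path_def by auto
  have fi: "f \<in> idems" using f(1) component_idems by blast
  have "last ?p \<in> idems" using \<open>epath ?p\<close> epath_idems last_in_set epath_nonempty by blast
  then have Rpf: "Rrel (last ?p) f" using u_end[OF f(2)] Rclass_eq_iff fi by blast
  have "tl ?p = [] \<Longrightarrow> Rrel e f"
    using Rpf \<open>hd ?p = e\<close> \<open>epath ?p\<close> by (cases ?p) auto
  note q = extend_tree_path[OF p fi _ this] Rpf
  have fT: "f \<notin> T" using edge_Lclass f(3) by blast
  have new: "l \<noteq> Lclass f" if "l \<in> VL" for l using that f(3) by blast
  show ?thesis
  proof unfold_locales
    show "insert (Lclass f) VL \<subseteq> Lclass ` component e" using VL_sub f(1) by auto
    show "insert f T \<subseteq> component e" using T_sub f(1) by auto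
    show "card (insert f T) + 1 = card VR + card (insert (Lclass f) VL)"
      using card_T finite_parts[OF fin] fT f(3) by simp
  qed (use VR_sub root root_path edge_Rclass edge_Lclass f u_end q new tree_paths_insert
        v_long v_last_edge v_end edge_loop_trivial in auto)
qed

lemma add_Rclass:
  assumes fin: "finite (component e)"
    and f: "f \<in> component e" "Lclass f \<in> VL" "Rclass f \<notin> VR"
  shows "partial_tree e (insert (Rclass f) VR) VL (u(Rclass f := v (Lclass f) @ [f])) v (insert f T)"
proof -
  let ?p = "v (Lclass f)"
  have p: "tree_path e T ?p" using v_tree_path f(2) .
  then have "epath ?p" unfolding tree_path_def by auto
  have fi: "f \<in> idems" using f(1) component_idems by blast
  have "last ?p \<in> idems" using \<open>epath ?p\<close> epath_idems last_in_set epath_nonempty by blast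
  then have Lpf: "Lrel (last ?p) f" using v_end[OF f(2)] Lclass_eq_iff fi by blast
  note q = extend_tree_path[OF p fi _ ] Lpf
  have fT: "f \<notin> T" using edge_Rclass f(3) by blast
  have new: "r \<noteq> Rclass f" if "r \<in> VR" for r using that f(3) by blast
  show ?thesis
  proof unfold_locales
    show "insert (Rclass f) VR \<subseteq> Rclass ` component e" using VR_sub f(1) by auto
    show "insert f T \<subseteq> component e" using T_sub f(1) by auto
    show "card (insert f T) + 1 = card (insert (Rclass f) VR) + card VL"
      using card_T finite_parts[OF fin] fT f(3) by simp
  qed (use VL_sub root root_path edge_Rclass edge_Lclass f v_end q new v_long[OF f(2)]
        tree_paths_insert u_end v_long v_last_edge edge_loop_trivial in auto)
qed

end

lemma (in partial_tree) grow:
  assumes fin: "finite (component e)"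
    and incomplete: "VR \<noteq> Rclass ` component e \<or> VL \<noteq> Lclass ` component e"
  shows "\<exists>VR' VL' u' v' T'. partial_tree e VR' VL' u' v' T' \<and> card VR + card VL < card VR' + card VL'"
proof -
  obtain f where f: "f \<in> component e"
    "(Rclass f \<in> VR \<and> Lclass f \<notin> VL) \<or> (Lclass f \<in> VL \<and> Rclass f \<notin> VR)"
  proof (rule ccontr)
    assume "\<not> thesis"
    with that have "\<forall>f\<in>component e. Rclass f \<in> VR \<longleftrightarrow> Lclass f \<in> VL" by blast
    then have "\<forall>f\<in>component e. Rclass f \<in> VR \<and> Lclass f \<in> VL"
      using closed_class_sets_cover[OF root] by blast
    then show False using incomplete VR_sub VL_sub by auto
  qed
  from f(2) show ?thesis
  proof
    assume "Rclass f \<in> VR \<and> Lclass f \<notin> VL"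
    then show ?thesis using add_Lclass[OF fin f(1)] finite_parts[OF fin] by fastforce
  next
    assume "Lclass f \<in> VL \<and> Rclass f \<notin> VR"
    then show ?thesis using add_Rclass[OF fin f(1)] finite_parts[OF fin] by fastforce
  qed
qed

lemma spanning_tree_exists:
  assumes fin: "finite (component e)" and e: "e \<in> idems"
  shows "\<exists>u v T. partial_tree e (Rclass ` component e) (Lclass ` component e) u v T"
proof -
  let ?M = "card (Rclass ` component e) + card (Lclass ` component e)"
  have "\<exists>u v T. partial_tree e (Rclass ` component e) (Lclass ` component e) u v T"
    if "partial_tree e VR VL u v T" for VR VL u v T
    using that
  proof (induction "?M - (card VR + card VL)" arbitrary: VR VL u v T rule: less_induct)
    case less
    show ?case
    proof (cases "VR = Rclass ` component e \<and> VL = Lclass ` component e")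
      case True
      then show ?thesis using less.prems by blast
    next
      case False
      then obtain VR' VL' u' v' T' where I': "partial_tree e VR' VL' u' v' T'"
        and lt: "card VR + card VL < card VR' + card VL'"
        using partial_tree.grow[OF less.prems fin] by blast
      have "card VR' \<le> card (Rclass ` component e)" "card VL' \<le> card (Lclass ` component e)"
        using partial_tree.VR_sub[OF I'] partial_tree.VL_sub[OF I'] fin
        by (simp_all add: card_mono)
      then have "?M - (card VR' + card VL') < ?M - (card VR + card VL)" using lt by linarith
      then show ?thesis using less.hyps[OF _ I'] by blast
    qed
  qed
  moreover have "partial_tree e {Rclass e} {} (\<lambda>_. [e]) (\<lambda>_. [e]) {}"
    by unfold_locales (use e component_self[OF e] in \<open>auto simp: tree_path_def\<close>)
  ultimately show ?thesis by blast
qed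

section \<open>A free basis of the vertex group\<close>

locale spanning_tree = partial_tree e "Rclass ` component e" "Lclass ` component e" u v T
  for e :: "'a::semigroup_mult" and u v T +
  assumes e_idem: "e \<in> idems" and finite_component: "finite (component e)"
begin

abbreviation non_tree_edges :: "'a set" where
  "non_tree_edges \<equiv> component e - T"

abbreviation G :: "'a list set monoid" where
  "G \<equiv> vertex_group e"

lemma group_G: "group G"
  using vertex_group_is_group[OF e_idem] .

lemma u_facts:
  assumes "f \<in> component e"
  shows "epath (u (Rclass f))" "hd (u (Rclass f)) = e" "Rrel (last (u (Rclass f))) f"
    "crossing_word non_tree_edges (u (Rclass f)) = []"
proof -
  have p: "tree_path e T (u (Rclass f))" using u_tree_path assms by blast
  then show epath: "epath (u (Rclass f))" and "hd (u (Rclass f)) = e"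
    unfolding tree_path_def by auto
  have "last (u (Rclass f)) \<in> idems" using epath epath_idems epath_nonempty last_in_set by blast
  moreover have "Rclass (last (u (Rclass f))) = Rclass f" using u_end assms by blast
  ultimately show "Rrel (last (u (Rclass f))) f"
    using Rclass_eq_iff component_idems[OF assms] by blast
  show "crossing_word non_tree_edges (u (Rclass f)) = []"
    using tree_path_crossing_word[OF p] by blast
qed

lemma v_facts:
  assumes "f \<in> component e"
  shows "epath (v (Lclass f))" "hd (v (Lclass f)) = e" "Lrel (last (v (Lclass f))) f"
    "last (v (Lclass f)) \<in> T" "crossing_word non_tree_edges (v (Lclass f)) = []"
proof -
  have p: "tree_path e T (v (Lclass f))" using v_tree_path assms by blast
  then show epath: "epath (v (Lclass f))" and "hd (v (Lclass f)) = e"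
    unfolding tree_path_def by auto
  have "last (v (Lclass f)) \<in> idems" using epath epath_idems epath_nonempty last_in_set by blast
  moreover have "Lclass (last (v (Lclass f))) = Lclass f" using v_end assms by blast
  ultimately show "Lrel (last (v (Lclass f))) f"
    using Lclass_eq_iff component_idems[OF assms] by blast
  show "last (v (Lclass f)) \<in> T" using v_last_edge assms by blast
  show "crossing_word non_tree_edges (v (Lclass f)) = []"
    using tree_path_crossing_word[OF p] by blast
qed

definition edge_loop :: "'a \<Rightarrow> 'a list" where
  "edge_loop f = u (Rclass f) @ [f] @ rev (v (Lclass f))"

lemma edge_loop_loop:
  assumes "f \<in> component e"
  shows "epath (edge_loop f)" "hd (edge_loop f) = e" "last (edge_loop f) = e"
proof -
  note U = u_facts[OF assms] and V = v_facts[OF assms]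
  have "epath (u (Rclass f) @ [f])"
    using epath_appendI[OF U(1), of "[f]"] U(3) component_idems[OF assms] by simp
  moreover have "adjacent f (hd (rev (v (Lclass f))))"
    using Lrel_sym[OF V(3)] by (simp add: hd_rev)
  ultimately show "epath (edge_loop f)"
    using epath_appendI epath_rev[OF V(1)] unfolding edge_loop_def by fastforce
  show "hd (edge_loop f) = e" "last (edge_loop f) = e"
    unfolding edge_loop_def using U(2) V(2) epath_nonempty[OF U(1)] epath_nonempty[OF V(1)]
    by (simp_all add: last_rev)
qed

lemma edge_loop_in_G: "f \<in> component e \<Longrightarrow> chain_of (edge_loop f) \<in> carrier G"
  using chain_of_in_vertex_group edge_loop_loop by blast

lemma edge_loop_tree_edge: "f \<in> T \<Longrightarrow> chain_of (edge_loop f) = \<one>\<^bsub>G\<^esub>"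
  using chain_of_eqI[OF edge_loop_trivial] by (simp add: edge_loop_def vertex_group_one)

text \<open>The loop through a non-tree edge \<open>f\<close> crosses exactly the letter \<open>f\<close>: its tree parts
  contribute nothing and the step into \<open>Lclass f\<close> is a proper \<open>\<L>\<close>-step, since \<open>f\<close> is
  not the tree edge that ends \<open>v (Lclass f)\<close>.\<close>
lemma edge_loop_crossing_word:
  assumes f: "f \<in> non_tree_edges"
  shows "crossing_word non_tree_edges (edge_loop f) = [(True, f)]"
proof -
  have fC: "f \<in> component e" using f by simp
  note U = u_facts[OF fC] and V = v_facts[OF fC]
  obtain u' b where ub: "u (Rclass f) = u' @ [b]" using U(1) epath_nonempty by (metis rev_exhaust)
  obtain c rest where vr: "rev (v (Lclass f)) = c # rest"
    using V(1) epath_nonempty by (cases "rev (v (Lclass f))") auto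
  have c: "c = last (v (Lclass f))" using arg_cong[OF vr, of hd] by (simp add: hd_rev)
  have "Lrel f c" using V(3) c Lrel_sym by blast
  moreover have "f \<noteq> c" using V(4) f c by auto
  ultimately have "\<not> Rrel f c" using Rrel_Lrel_eq by blast
  then have "step_word non_tree_edges f c = [(True, f)]"
    using f V(4) c by (simp add: step_word_def letter_pos_def letter_neg_def)
  moreover have "crossing_word non_tree_edges (u (Rclass f) @ [f]) = []"
    using U(3,4) ub crossing_word_split[of _ u' b "[f]"] by (simp add: step_word_def)
  moreover have "crossing_word non_tree_edges (c # rest) = []"
    using vr crossing_word_rev[of _ "v (Lclass f)"] V(5) by simp
  ultimately show ?thesis
    unfolding edge_loop_def
    using crossing_word_split[of _ "u (Rclass f)" f "rev (v (Lclass f))"] vr by simp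
qed

definition basis :: "'a list set set" where
  "basis = (\<lambda>f. chain_of (edge_loop f)) ` non_tree_edges"

lemma basis_in_G: "basis \<subseteq> carrier G"
  unfolding basis_def using edge_loop_in_G by auto

lemma edge_loop_generated: "f \<in> component e \<Longrightarrow> chain_of (edge_loop f) \<in> generate G basis"
  using edge_loop_tree_edge generate.one generate.incl[of _ basis G]
  unfolding basis_def by (cases "f \<in> T") auto

definition step_loop :: "'a \<Rightarrow> 'a \<Rightarrow> 'a list" where
  "step_loop f g = u (Rclass f) @ [f, g] @ rev (u (Rclass g))"

lemma step_loop_loop:
  assumes "f \<in> component e" "g \<in> component e" "adjacent f g"
  shows "epath (step_loop f g)" "hd (step_loop f g) = e" "last (step_loop f g) = e"
proof -
  note Uf = u_facts[OF assms(1)] and Ug = u_facts[OF assms(2)]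
  have "epath (u (Rclass f) @ [f])"
    using epath_appendI[OF Uf(1), of "[f]"] Uf(3) component_idems[OF assms(1)] by simp
  then have "epath ((u (Rclass f) @ [f]) @ [g])"
    using epath_appendI[of "u (Rclass f) @ [f]" "[g]"] assms(3) component_idems[OF assms(2)]
    by simp
  moreover have "adjacent g (hd (rev (u (Rclass g))))"
    using Rrel_sym[OF Ug(3)] by (simp add: hd_rev)
  ultimately show "epath (step_loop f g)"
    using epath_appendI epath_rev[OF Ug(1)] unfolding step_loop_def by fastforce
  show "hd (step_loop f g) = e" "last (step_loop f g) = e"
    unfolding step_loop_def using Uf(2) Ug(2) epath_nonempty[OF Uf(1)] epath_nonempty[OF Ug(1)]
    by (simp_all add: last_rev)
qed

text \<open>An \<open>\<R>\<close>-step stays inside the \<open>\<R>\<close>-class, so its loop is trivial.\<close>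
lemma step_loop_Rrel:
  assumes "f \<in> component e" "g \<in> component e" "Rrel f g"
  shows "chain_of (step_loop f g) = \<one>\<^bsub>G\<^esub>"
proof -
  note Uf = u_facts[OF assms(1)]
  have same: "Rclass g = Rclass f"
    using Rclass_eq_iff assms component_idems Rrel_sym by metis
  obtain u' b where ub: "u (Rclass f) = u' @ [b]" using Uf(1) epath_nonempty by (metis rev_exhaust)
  have bf: "Rrel b f" and bg: "Rrel b g" using Uf(3) ub Rrel_trans assms(3) by auto
  have loop: "step_loop f g = u' @ [b, f, g] @ (b # rev u')"
    using ub same by (simp add: step_loop_def)
  then have s1: "(step_loop f g, u' @ [b, g, b] @ rev u') \<in> chain_equiv"
    using chain_equiv_delete[of u' b f g "b # rev u'"] step_loop_loop[OF assms(1,2)] bf assms(3)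
    by simp
  have s2: "(u' @ [b, g, b] @ rev u', u' @ [b, b] @ rev u') \<in> chain_equiv"
    using chain_equiv_delete s1 chain_equiv_epath bg Rrel_sym by blast
  have s3: "(u' @ [b, b] @ rev u', [e]) \<in> chain_equiv"
    using chain_equiv_retrace[OF Uf(1)] ub Uf(2) by simp
  have "(step_loop f g, [e]) \<in> chain_equiv"
    using chain_equiv_trans[OF chain_equiv_trans[OF s1 s2] s3] .
  then show ?thesis using chain_of_eqI by (simp add: vertex_group_one)
qed

text \<open>An \<open>\<L>\<close>-step \<open>f \<rightarrow> g\<close> has loop \<open>\<lambda>\<^sub>f \<lambda>\<^sub>g\<^sup>-\<^sup>1\<close>, the detour through the tree path
  of the common \<open>\<L>\<close>-class cancelling.\<close>
lemma step_loop_Lrel: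
  assumes f: "f \<in> component e" and g: "g \<in> component e" and "Lrel f g"
  shows "chain_of (step_loop f g) =
    chain_of (edge_loop f) \<otimes>\<^bsub>G\<^esub> inv\<^bsub>G\<^esub> chain_of (edge_loop g)"
proof -
  note V = v_facts[OF f]
  have same: "Lclass g = Lclass f"
    using Lclass_eq_iff assms component_idems Lrel_sym by metis
  have turn: "Lrel f (last (v (Lclass f)))" "Lrel (last (v (Lclass f))) g"
    using V(3) Lrel_sym Lrel_trans assms(3) by blast+
  have rev_g: "rev (edge_loop g) = v (Lclass f) @ [g] @ rev (u (Rclass g))"
    using same by (simp add: edge_loop_def)
  have join: "edge_loop f @ tl (rev (edge_loop g)) =
    u (Rclass f) @ [f] @ (rev (v (Lclass f)) @ tl (v (Lclass f))) @ [g] @ rev (u (Rclass g))"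
    using rev_g epath_nonempty[OF V(1)] by (simp add: edge_loop_def)
  have Lg: "epath (rev (edge_loop g))" "hd (rev (edge_loop g)) = e"
    using edge_loop_loop[OF g] epath_rev by (auto simp: hd_rev)
  have "epath (edge_loop f @ tl (rev (edge_loop g)))"
    using epath_join[OF edge_loop_loop(1)[OF f] Lg(1)] edge_loop_loop(3)[OF f] Lg(2) by simp
  then have "(edge_loop f @ tl (rev (edge_loop g)), step_loop f g) \<in> chain_equiv"
    using chain_equiv_detour[of "u (Rclass f)" f "v (Lclass f)" g "rev (u (Rclass g))"] V(1) turn
    unfolding join by (simp add: step_loop_def)
  then have "chain_of (step_loop f g) = chain_of (edge_loop f) \<otimes>\<^bsub>G\<^esub> chain_of (rev (edge_loop g))"
    using vertex_group_mult[OF edge_loop_loop(1)[OF f] Lg(1)] edge_loop_loop(3)[OF f] Lg(2)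
      chain_of_eqI by metis
  then show ?thesis using vertex_group_inv[OF e_idem edge_loop_loop[OF g]] by simp
qed

lemma step_loop_generated:
  assumes "f \<in> component e" "g \<in> component e" "adjacent f g"
  shows "chain_of (step_loop f g) \<in> generate G basis"
proof (cases "Rrel f g")
  case True
  then show ?thesis using step_loop_Rrel[OF assms(1,2)] generate.one[of G basis] by simp
next
  case False
  have "inv\<^bsub>G\<^esub> chain_of (edge_loop g) \<in> generate G basis"
    using group.generate_m_inv_closed[OF group_G basis_in_G edge_loop_generated[OF assms(2)]] .
  then show ?thesis
    using generate.eng[OF edge_loop_generated[OF assms(1)]] step_loop_Lrel[OF assms(1,2)]
      False assms(3)
    by simp
qed

lemma path_loop_generated:
  "epath q \<Longrightarrow> hd q = e \<Longrightarrow> chain_of (q @ rev (u (Rclass (last q)))) \<in> generate G basis"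
proof (induction q rule: rev_induct)
  case (snoc g q)
  show ?case
  proof (cases "q = []")
    case True
    then have "(q @ [g]) @ rev (u (Rclass (last (q @ [g])))) = [] @ [e, e] @ []"
      using snoc.prems root_path by simp
    then have "chain_of ((q @ [g]) @ rev (u (Rclass (last (q @ [g]))))) = \<one>\<^bsub>G\<^esub>"
      using chain_of_eqI[OF chain_equiv_dedup[of "[]" e "[]"]] e_idem Rrel_refl[OF e_idem]
      by (simp add: vertex_group_one)
    then show ?thesis using generate.one by metis
  next
    case False
    define f where "f = last q"
    have q: "epath q" "hd q = e" "g \<in> idems" "adjacent f g"
      using snoc.prems False epath_snoc[of q g] f_def by auto
    have fC: "f \<in> component e" and gC: "g \<in> component e"
      using component_last[OF q(1,2)] component_last[OF snoc.prems] f_def by auto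
    note Uf = u_facts[OF fC]
    define z where "z = q @ rev (u (Rclass f))"
    have z: "epath z" "last z = e"
      using epath_appendI[OF q(1) epath_rev[OF Uf(1)]] Rrel_sym[OF Uf(3)] Uf(2)
        epath_nonempty[OF Uf(1)]
      unfolding z_def f_def by (simp_all add: hd_rev last_rev)
    note K = step_loop_loop[OF fC gC q(4)]
    obtain q' where q': "q = q' @ [f]" using False f_def by (metis append_butlast_last_id)
    have "z @ tl (step_loop f g) =
      q' @ [f] @ (rev (u (Rclass f)) @ tl (u (Rclass f))) @ [f] @ (g # rev (u (Rclass g)))"
      using q' epath_nonempty[OF Uf(1)] by (simp add: z_def step_loop_def)
    moreover have "epath (z @ tl (step_loop f g))"
      using epath_join[OF z(1) K(1)] z(2) K(2) by simp
    moreover have "Rrel f (last (u (Rclass f))) \<and> Rrel (last (u (Rclass f))) f"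
      using Uf(3) Rrel_sym by blast
    ultimately have d1: "(z @ tl (step_loop f g), q' @ [f, f] @ (g # rev (u (Rclass g)))) \<in> chain_equiv"
      using chain_equiv_detour[of q' f "u (Rclass f)" f "g # rev (u (Rclass g))"] Uf(1) by simp
    have d2: "(q' @ [f, f] @ (g # rev (u (Rclass g))), (q @ [g]) @ rev (u (Rclass g))) \<in> chain_equiv"
      using chain_equiv_dedup d1 chain_equiv_epath q' by fastforce
    have "chain_of ((q @ [g]) @ rev (u (Rclass (last (q @ [g]))))) =
      chain_of z \<otimes>\<^bsub>G\<^esub> chain_of (step_loop f g)"
      using vertex_group_mult[OF z(1) K(1)] z(2) K(2) chain_of_eqI[OF chain_equiv_trans[OF d1 d2]]
      by simp
    moreover have "chain_of z \<in> generate G basis" using snoc.IH[OF q(1,2)] by (simp add: z_def f_def)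
    ultimately show ?thesis using generate.eng step_loop_generated[OF fC gC q(4)] by simp
  qed
qed simp

lemma basis_generates: "generate G basis = carrier G"
proof
  show "generate G basis \<subseteq> carrier G" using group.generate_incl[OF group_G basis_in_G] .
  show "carrier G \<subseteq> generate G basis"
  proof
    fix x assume "x \<in> carrier G"
    then obtain p where p: "epath p" "hd p = e" "last p = e" "x = chain_of p"
      by (metis vertex_group_elem)
    obtain p' where p': "p = p' @ [e]" using p epath_nonempty by (metis append_butlast_last_id)
    have "p @ rev (u (Rclass (last p))) = p' @ [e, e] @ []" using p p' root_path by simp
    moreover have "epath (p' @ [e, e] @ [])"
      using epath_appendI[OF p(1), of "[e]"] p e_idem Rrel_refl[OF e_idem] p' by simp
    ultimately have "chain_of (p @ rev (u (Rclass (last p)))) = x"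
      using chain_of_eqI[OF chain_equiv_dedup[of p' e "[]"]] p p' by simp
    then show "x \<in> generate G basis" using path_loop_generated[OF p(1,2)] by simp
  qed
qed

text \<open>Distinct non-tree edges give distinct loops, as their crossing words differ.\<close>
lemma edge_loop_inj: "inj_on (\<lambda>f. chain_of (edge_loop f)) non_tree_edges"
proof (rule inj_onI)
  fix f g assume f: "f \<in> non_tree_edges" and g: "g \<in> non_tree_edges"
    and "chain_of (edge_loop f) = chain_of (edge_loop g)"
  then have "(edge_loop f, edge_loop g) \<in> chain_equiv"
    using chain_of_eq_iff edge_loop_loop(1) by blast
  then have "free_reduce (crossing_word non_tree_edges (edge_loop f)) =
      free_reduce (crossing_word non_tree_edges (edge_loop g))"
    by (rule chain_equiv_free_reduce)
  then show "f = g" using edge_loop_crossing_word[OF f] edge_loop_crossing_word[OF g] by simp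
qed

lemma card_basis: "finite basis" "card basis = card non_tree_edges"
  using edge_loop_inj finite_component card_image unfolding basis_def by auto

lemma word_loop:
  assumes "set (map snd w) \<subseteq> non_tree_edges"
  shows "\<exists>P. epath P \<and> hd P = e \<and> last P = e \<and>
    eval_word G (map (apsnd (\<lambda>f. chain_of (edge_loop f))) w) = chain_of P \<and>
    crossing_word non_tree_edges P = w"
  using assms
proof (induction w)
  case Nil
  then show ?case using e_idem by (intro exI[of _ "[e]"]) (simp add: vertex_group_one)
next
  case (Cons a w)
  obtain b f where a: "a = (b, f)" by (cases a)
  obtain P where P: "epath P" "hd P = e" "last P = e"
    "eval_word G (map (apsnd (\<lambda>f. chain_of (edge_loop f))) w) = chain_of P"
    "crossing_word non_tree_edges P = w"
    using Cons by auto
  have f: "f \<in> non_tree_edges" using Cons.prems a by simp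
  define l where "l = (if b then edge_loop f else rev (edge_loop f))"
  have l: "epath l" "hd l = e" "last l = e"
    using edge_loop_loop[of f] f epath_rev unfolding l_def by (auto simp: hd_rev last_rev)
  have "crossing_word non_tree_edges l = [(b, f)]"
    using edge_loop_crossing_word[OF f] crossing_word_rev[of _ "edge_loop f"] unfolding l_def
    by (simp add: flip_def)
  moreover have "chain_of l = (if b then chain_of (edge_loop f) else inv\<^bsub>G\<^esub> chain_of (edge_loop f))"
    using vertex_group_inv[OF e_idem edge_loop_loop[of f]] f unfolding l_def by simp
  ultimately show ?case
    using a P l vertex_group_mult[OF l(1) P(1)] loop_join[OF l P(1-3)]
      crossing_word_join[OF epath_nonempty[OF l(1)] epath_nonempty[OF P(1)]]
    by (intro exI[of _ "l @ tl P"]) simp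
qed

text \<open>No nonempty reduced word in the basis evaluates to the identity: its loop would have
  trivial reduced crossing word, while the crossing word is the word itself.\<close>
lemma basis_free:
  assumes "w \<noteq> []" "set (map snd w) \<subseteq> basis" "reduced_word w"
  shows "eval_word G w \<noteq> \<one>\<^bsub>G\<^esub>"
proof
  assume one: "eval_word G w = \<one>\<^bsub>G\<^esub>"
  let ?gen = "\<lambda>f. chain_of (edge_loop f)"
  let ?edge = "the_inv_into non_tree_edges ?gen"
  have inj: "inj_on ?gen non_tree_edges" by (rule edge_loop_inj)
  have letters: "x \<in> basis" if "x \<in> snd ` set w" for x using assms(2) that by auto
  define w' where "w' = map (apsnd ?edge) w"
  have w: "map (apsnd ?gen) w' = w"
    unfolding w'_def using letters f_the_inv_into_f[OF inj] unfolding basis_def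
    by (induction w) auto
  have edge: "?edge x \<in> non_tree_edges" if "x \<in> basis" for x
    using the_inv_into_into[OF inj _ subset_refl] that unfolding basis_def by blast
  have "set (map snd w') \<subseteq> non_tree_edges"
    unfolding w'_def using letters edge by auto
  then obtain P where P: "epath P" "hd P = e" "last P = e" "eval_word G w = chain_of P"
    "crossing_word non_tree_edges P = w'"
    using word_loop w by metis
  have "(P, [e]) \<in> chain_equiv"
    using one P(1,4) chain_of_eq_iff[OF P(1), of "[e]"] e_idem by (simp add: vertex_group_one)
  then have "free_reduce w' = []"
    using chain_equiv_free_reduce P(5) by fastforce
  moreover have "inj_on ?edge (snd ` set w)"
    using inj_on_subset[OF inj_on_the_inv_into[OF inj]] letters unfolding basis_def by blast
  then have "freely_reduced w'"
    unfolding w'_def using freely_reduced_relabel assms(3) by blast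
  ultimately have "w' = []" using free_reduce_id by metis
  then show False using assms(1) w'_def by simp
qed

lemma vertex_group_free: "free_group_of_rank G (card non_tree_edges)"
  unfolding free_group_of_rank_def free_basis_def
  using group_G card_basis basis_in_G basis_generates basis_free by blast

end

theorem mainTheorem6:
  fixes e :: "'a::semigroup_mult"
  assumes "regular_semigroup TYPE('a)"
    and "e \<in> idems"
    and "finite (component e)"
    and "card (component e) = k"
    and "card (Rclass ` component e) = m"
    and "card (Lclass ` component e) = n"
  shows "\<exists>r::nat. int r = int k - (int m + int n) + 1 \<and> free_group_of_rank (vertex_group e) r"
proof -
  obtain u v T where "partial_tree e (Rclass ` component e) (Lclass ` component e) u v T"
    using spanning_tree_exists[OF assms(3,2)] by blast
  then interpret spanning_tree e u v T
    using assms(2,3) by (simp add: spanning_tree_def spanning_tree_axioms_def)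
  have "card non_tree_edges + card T = k"
    using card_Diff_subset[OF finite_subset[OF T_sub assms(3)] T_sub] card_mono[OF assms(3) T_sub]
      assms(4) by simp
  then have "int (card non_tree_edges) = int k - (int m + int n) + 1"
    using card_T assms(5,6) by linarith
  then show ?thesis using vertex_group_free by blast
qed

end
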